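(* Let $X=(X(t))_{t\in\mathbb{R}}$ be a process with $X(0)=0$ a.s., independent and stationary increments in the sense that for $s_0<s_1<\dots<s_m$ the increments $X(s_i)-X(s_{i-1})$ are independent and $X(t)-X(s)\overset{(d)}{=}X(t-s)$ for all $t>s$ (whatever the signs of $s,t$), and such that for each $t\ne0$, $X(t)$ has a density $\Phi_t$ with respect to Lebesgue measure. Let $k\ge1$ and let $t_0=0,t_1,\dots,t_k$ be $k+1$ distinct reals whose gaps sequence is $(g_1,\dots,g_k)\in(0,\infty)^k$. Then the gaps sequence of $(X(t_0),\dots,X(t_k))$ has density on $(\mathbb{R}^+)^k$ given by $$\Psi_{g}(x_1,\dots,x_k)=\sum_{\tau}\prod_{i=1}^k\Phi_{g_i}\big(\bar x_{\tau(i)}-\bar x_{\tau(i-1)}\big)\,1_{x_i>0},$$ the sum being over all permutations $\tau$ of $\{0,1,\dots,k\}$, where $\bar x_0=0$ and $\bar x_i=x_1+\dots+x_i$.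
   Context: For a finite sequence $\ell_0,\dots,\ell_k$ with increasing rearrangement $\hat\ell_0\le\dots\le\hat\ell_k$, its gaps sequence is $(\hat\ell_i-\hat\ell_{i-1})_{1\le i\le k}$. *)

theory Defs
  imports "HOL-Probability.Probability" "HOL-Combinatorics.Permutations"
begin

definition gaps_seq :: "nat \<Rightarrow> (nat \<Rightarrow> real) \<Rightarrow> nat \<Rightarrow> real" where
  "gaps_seq k l = (\<lambda>i\<in>{1..k}. let s = sort (map l [0..<Suc k]) in s ! i - s ! (i - 1))"

definition xbar :: "(nat \<Rightarrow> real) \<Rightarrow> nat \<Rightarrow> real" where
  "xbar x i = (\<Sum>j=1..i. x j)"

definition Psi :: "(real \<Rightarrow> real \<Rightarrow> ennreal) \<Rightarrow> nat \<Rightarrow> (nat \<Rightarrow> real) \<Rightarrow> (nat \<Rightarrow> real) \<Rightarrow> ennreal" where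
  "Psi \<Phi> k g x = (\<Sum>\<tau> | \<tau> permutes {0..k}.
      \<Prod>i=1..k. \<Phi> (g i) (xbar x (\<tau> i) - xbar x (\<tau> (i - 1))) * (if x i > 0 then 1 else 0))"

end

theory Submission
  imports Defs
begin

text \<open>Order the times as \<open>s\<^sub>0 < \<dots> < s\<^sub>k\<close>. The increments \<open>D\<^sub>i = X(s\<^sub>i) - X(s\<^sub>i\<^sub>-\<^sub>1)\<close> are
  independent with densities \<open>\<Phi> (g i)\<close>, and up to a common translation the values \<open>X(t\<^sub>j)\<close> are
  the partial sums of \<open>D\<close>; so it suffices to find the law of the gaps of the partial sums of a
  random vector with density \<open>\<Prod>\<^sub>i \<Phi> (g i) (d\<^sub>i)\<close>. Almost every \<open>d\<close> has distinct partial sums;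
  if \<open>\<tau>\<close> ranks them and \<open>x\<close> is their gaps sequence, then \<open>d = increments_along k \<tau> x\<close>,
  i.e. \<open>d\<^sub>i = xbar x (\<tau> i) - xbar x (\<tau> (i - 1))\<close>. For fixed \<open>\<tau>\<close> this map \<open>x \<mapsto> d\<close> is a composition of
  shears and coordinate permutations, hence preserves Lebesgue measure, and summing the change
  of variables over all \<open>\<tau>\<close> produces \<open>\<Psi>\<close>.\<close>

section \<open>Maps preserving Lebesgue measure on \<open>\<real>\<^sup>I\<close>\<close>

abbreviation Pi_lborel :: "'i set \<Rightarrow> ('i \<Rightarrow> real) measure" where
  "Pi_lborel I \<equiv> PiM I (\<lambda>_. lborel)"

interpretation Pi_lborel: product_sigma_finite "\<lambda>_::'i. lborel :: real measure"
  by standard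

lemma measurable_Pi_lborel_component:
  "i \<in> I \<Longrightarrow> (\<lambda>x. x i) \<in> borel_measurable (Pi_lborel I)"
  using measurable_component_singleton[of i I "\<lambda>_. lborel"] by simp

definition lborel_preserving :: "'i set \<Rightarrow> (('i \<Rightarrow> real) \<Rightarrow> 'i \<Rightarrow> real) \<Rightarrow> bool" where
  "lborel_preserving I T \<longleftrightarrow> T \<in> measurable (Pi_lborel I) (Pi_lborel I) \<and>
     (\<forall>f \<in> borel_measurable (Pi_lborel I).
        (\<integral>\<^sup>+x. f (T x) \<partial>Pi_lborel I) = (\<integral>\<^sup>+x. f x \<partial>Pi_lborel I))"

lemma lborel_preservingI:
  assumes "T \<in> measurable (Pi_lborel I) (Pi_lborel I)"
    and "\<And>f. f \<in> borel_measurable (Pi_lborel I) \<Longrightarrow>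
           (\<integral>\<^sup>+x. f (T x) \<partial>Pi_lborel I) = (\<integral>\<^sup>+x. f x \<partial>Pi_lborel I)"
  shows "lborel_preserving I T"
  using assms by (simp add: lborel_preserving_def)

lemma lborel_preserving_measurable:
  "lborel_preserving I T \<Longrightarrow> T \<in> measurable (Pi_lborel I) (Pi_lborel I)"
  by (simp add: lborel_preserving_def)

lemma lborel_preserving_nn_integral:
  "lborel_preserving I T \<Longrightarrow> f \<in> borel_measurable (Pi_lborel I) \<Longrightarrow>
    (\<integral>\<^sup>+x. f (T x) \<partial>Pi_lborel I) = (\<integral>\<^sup>+x. f x \<partial>Pi_lborel I)"
  by (simp add: lborel_preserving_def)

lemma lborel_preserving_compose:
  assumes S: "lborel_preserving I S" and T: "lborel_preserving I T"
  shows "lborel_preserving I (\<lambda>x. T (S x))"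
proof (rule lborel_preservingI)
  note [measurable] = lborel_preserving_measurable[OF S] lborel_preserving_measurable[OF T]
  show "(\<lambda>x. T (S x)) \<in> measurable (Pi_lborel I) (Pi_lborel I)" by measurable
  fix f :: "_ \<Rightarrow> ennreal" assume [measurable]: "f \<in> borel_measurable (Pi_lborel I)"
  have "(\<integral>\<^sup>+x. f (T (S x)) \<partial>Pi_lborel I) = (\<integral>\<^sup>+x. f (T x) \<partial>Pi_lborel I)"
    by (rule lborel_preserving_nn_integral[OF S]) measurable
  also have "\<dots> = (\<integral>\<^sup>+x. f x \<partial>Pi_lborel I)"
    by (rule lborel_preserving_nn_integral[OF T]) measurable
  finally show "(\<integral>\<^sup>+x. f (T (S x)) \<partial>Pi_lborel I) = (\<integral>\<^sup>+x. f x \<partial>Pi_lborel I)" .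
qed

lemma lborel_preserving_cong:
  assumes T: "lborel_preserving I T" and eq: "\<And>x. x \<in> space (Pi_lborel I) \<Longrightarrow> T x = S x"
  shows "lborel_preserving I S"
proof (rule lborel_preservingI)
  show "S \<in> measurable (Pi_lborel I) (Pi_lborel I)"
    using lborel_preserving_measurable[OF T] eq by (simp cong: measurable_cong)
  fix f :: "_ \<Rightarrow> ennreal" assume "f \<in> borel_measurable (Pi_lborel I)"
  then show "(\<integral>\<^sup>+x. f (S x) \<partial>Pi_lborel I) = (\<integral>\<^sup>+x. f x \<partial>Pi_lborel I)"
    using lborel_preserving_nn_integral[OF T] eq by (simp cong: nn_integral_cong)
qed

lemma lborel_preserving_id: "lborel_preserving I (\<lambda>x. x)"
  by (rule lborel_preservingI) simp_all

lemma lborel_preserving_left_inverse: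
  assumes T: "lborel_preserving I T" and S: "S \<in> measurable (Pi_lborel I) (Pi_lborel I)"
    and inv: "\<And>x. x \<in> space (Pi_lborel I) \<Longrightarrow> S (T x) = x"
  shows "lborel_preserving I S"
proof (rule lborel_preservingI[OF S])
  fix f :: "_ \<Rightarrow> ennreal" assume [measurable]: "f \<in> borel_measurable (Pi_lborel I)"
  note [measurable] = S
  have "(\<integral>\<^sup>+x. f (S x) \<partial>Pi_lborel I) = (\<integral>\<^sup>+x. f (S (T x)) \<partial>Pi_lborel I)"
    by (rule lborel_preserving_nn_integral[OF T, symmetric]) measurable
  also have "\<dots> = (\<integral>\<^sup>+x. f x \<partial>Pi_lborel I)"
    using inv by (simp cong: nn_integral_cong)
  finally show "(\<integral>\<^sup>+x. f (S x) \<partial>Pi_lborel I) = (\<integral>\<^sup>+x. f x \<partial>Pi_lborel I)" .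
qed

lemma lborel_preserving_shear:
  assumes I: "finite I" "i \<in> I" and c[measurable]: "c \<in> borel_measurable (Pi_lborel I)"
    and c_indep: "\<And>x y. c (x(i := y)) = c x" and a: "\<bar>a\<bar> = 1"
  shows "lborel_preserving I (\<lambda>x. \<lambda>j\<in>I. if j = i then a * x i + c x else x j)"
    (is "lborel_preserving I ?T")
proof (rule lborel_preservingI)
  show T: "?T \<in> measurable (Pi_lborel I) (Pi_lborel I)"
    using I(2) by (intro measurable_restrict) auto
  fix f :: "_ \<Rightarrow> ennreal" assume f[measurable]: "f \<in> borel_measurable (Pi_lborel I)"
  define J where "J = I - {i}"
  have IJ: "I = insert i J" "i \<notin> J" "finite J" using I by (auto simp: J_def)
  have fT: "(\<lambda>x. f (?T x)) \<in> borel_measurable (Pi_lborel I)"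
    using measurable_comp[OF T f] by (simp add: comp_def)
  have "(\<integral>\<^sup>+x. f (?T x) \<partial>Pi_lborel I)
      = (\<integral>\<^sup>+x. (\<integral>\<^sup>+y. f (?T (x(i := y))) \<partial>lborel) \<partial>Pi_lborel J)"
    using Pi_lborel.product_nn_integral_insert[OF IJ(3,2) fT[unfolded IJ(1)]] IJ(1) by simp
  also have "\<dots> = (\<integral>\<^sup>+x. (\<integral>\<^sup>+y. f (x(i := y)) \<partial>lborel) \<partial>Pi_lborel J)"
  proof (rule nn_integral_cong)
    fix x assume x: "x \<in> space (Pi_lborel J)"
    have [measurable]: "(\<lambda>y. f (x(i := y))) \<in> borel_measurable borel"
      using measurable_comp[OF measurable_component_update[OF x IJ(2)] f[unfolded IJ(1)]]
      by (simp add: comp_def)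
    have "?T (x(i := y)) = x(i := c x + a * y)" for y
      using x IJ by (auto simp: c_indep space_PiM PiE_def extensional_def fun_eq_iff)
    moreover have "(\<integral>\<^sup>+y. f (x(i := y)) \<partial>lborel) = (\<integral>\<^sup>+y. f (x(i := c x + a * y)) \<partial>lborel)"
      using nn_integral_real_affine[of "\<lambda>y. f (x(i := y))" a "c x"] a by auto
    ultimately show "(\<integral>\<^sup>+y. f (?T (x(i := y))) \<partial>lborel) = (\<integral>\<^sup>+y. f (x(i := y)) \<partial>lborel)"
      by simp
  qed
  also have "\<dots> = (\<integral>\<^sup>+x. f x \<partial>Pi_lborel I)"
    using Pi_lborel.product_nn_integral_insert[OF IJ(3,2) f[unfolded IJ(1)]] IJ(1) by simp
  finally show "(\<integral>\<^sup>+x. f (?T x) \<partial>Pi_lborel I) = (\<integral>\<^sup>+x. f x \<partial>Pi_lborel I)" .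
qed

lemma lborel_preserving_reindex:
  assumes I: "finite I" and r: "bij_betw r I I"
  shows "lborel_preserving I (\<lambda>x. \<lambda>j\<in>I. x (r j))"
    (is "lborel_preserving I ?T")
proof (rule lborel_preservingI)
  show T: "?T \<in> measurable (Pi_lborel I) (Pi_lborel I)"
  proof (rule measurable_restrict)
    fix j assume "j \<in> I"
    then have "r j \<in> I" using r by (auto simp: bij_betw_def)
    then show "(\<lambda>x. x (r j)) \<in> measurable (Pi_lborel I) lborel"
      using measurable_Pi_lborel_component by simp
  qed
  let ?r' = "the_inv_into I r"
  have r': "r j \<in> I" "?r' (r j) = j" "r (?r' i) = i" "?r' i \<in> I" if "j \<in> I" "i \<in> I" for i j
    using r that by (auto simp: bij_betw_def the_inv_into_f_f f_the_inv_into_f the_inv_into_into)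
  have "distr (Pi_lborel I) (Pi_lborel I) ?T = Pi_lborel I"
  proof (rule Pi_lborel.PiM_eqI[OF I])
    fix A :: "_ \<Rightarrow> real set" assume A: "\<And>i. i \<in> I \<Longrightarrow> A i \<in> sets lborel"
    have "?T -` Pi\<^sub>E I A \<inter> space (Pi_lborel I) = Pi\<^sub>E I (\<lambda>i. A (?r' i))"
      by (auto simp: space_PiM PiE_def Pi_def extensional_def) (metis r')+
    then have "emeasure (distr (Pi_lborel I) (Pi_lborel I) ?T) (Pi\<^sub>E I A)
        = (\<Prod>i\<in>I. emeasure lborel (A (?r' i)))"
      using A T I r' by (simp add: emeasure_distr sets_PiM_I_finite Pi_lborel.emeasure_PiM)
    also have "\<dots> = (\<Prod>i\<in>I. emeasure lborel (A i))"
      using r by (intro prod.reindex_bij_betw bij_betw_the_inv_into)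
    finally show "emeasure (distr (Pi_lborel I) (Pi_lborel I) ?T) (Pi\<^sub>E I A) = (\<Prod>i\<in>I. emeasure lborel (A i))" .
  qed simp
  then show "(\<integral>\<^sup>+x. f (?T x) \<partial>Pi_lborel I) = (\<integral>\<^sup>+x. f x \<partial>Pi_lborel I)"
    if "f \<in> borel_measurable (Pi_lborel I)" for f :: "_ \<Rightarrow> ennreal"
    using that T by (metis nn_integral_distr)
qed

section \<open>Partial sums, increments and recentering\<close>

lemma xbar_0 [simp]: "xbar x 0 = 0"
  by (simp add: xbar_def)

lemma xbar_Suc: "xbar x (Suc n) = xbar x n + x (Suc n)"
  by (simp add: xbar_def)

lemma measurable_xbar:
  "i \<le> k \<Longrightarrow> (\<lambda>x. xbar x i) \<in> borel_measurable (Pi_lborel {1..k})"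
  unfolding xbar_def by (intro borel_measurable_sum measurable_Pi_lborel_component) auto

definition zero_extension :: "(nat \<Rightarrow> real) \<Rightarrow> nat \<Rightarrow> real" where
  "zero_extension z i = (if i = 0 then 0 else z i)"

lemma measurable_zero_extension:
  "j \<in> insert 0 I \<Longrightarrow> (\<lambda>x. zero_extension x j) \<in> borel_measurable (Pi_lborel I)"
  by (cases "j = 0") (auto simp: zero_extension_def)

definition partial_sums :: "nat \<Rightarrow> (nat \<Rightarrow> real) \<Rightarrow> nat \<Rightarrow> real" where
  "partial_sums k x = (\<lambda>i\<in>{1..k}. xbar x i)"

definition increments :: "nat \<Rightarrow> (nat \<Rightarrow> real) \<Rightarrow> nat \<Rightarrow> real" where
  "increments k z = (\<lambda>i\<in>{1..k}. zero_extension z i - zero_extension z (i - 1))"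

text \<open>A vector \<open>z\<close> indexed by \<open>{1..k}\<close> stands for the point \<open>(0, z\<^sub>1, \<dots>, z\<^sub>k)\<close>;
  \<open>recenter k \<tau> z\<close> lists its coordinates in the order \<open>\<tau>\<close> and moves coordinate \<open>\<tau> 0\<close>
  to the origin.\<close>
definition recenter :: "nat \<Rightarrow> (nat \<Rightarrow> nat) \<Rightarrow> (nat \<Rightarrow> real) \<Rightarrow> nat \<Rightarrow> real" where
  "recenter k \<tau> z = (\<lambda>i\<in>{1..k}. zero_extension z (\<tau> i) - zero_extension z (\<tau> 0))"

definition increments_along :: "nat \<Rightarrow> (nat \<Rightarrow> nat) \<Rightarrow> (nat \<Rightarrow> real) \<Rightarrow> nat \<Rightarrow> real" where
  "increments_along k \<tau> x = (\<lambda>i\<in>{1..k}. xbar x (\<tau> i) - xbar x (\<tau> (i - 1)))"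

lemma zero_extension_partial_sums: "m \<le> k \<Longrightarrow> zero_extension (partial_sums k x) m = xbar x m"
  by (simp add: zero_extension_def partial_sums_def)

lemma zero_extension_recenter:
  "j \<le> k \<Longrightarrow> zero_extension (recenter k \<tau> z) j = zero_extension z (\<tau> j) - zero_extension z (\<tau> 0)"
  by (simp add: zero_extension_def recenter_def)

lemma increments_partial_sums:
  assumes "x \<in> space (Pi_lborel {1..k})"
  shows "increments k (partial_sums k x) = x"
proof
  fix i
  show "increments k (partial_sums k x) i = x i"
  proof (cases "i \<in> {1..k}")
    case True
    then obtain m where "i = Suc m" by (cases i) auto
    with True show ?thesis
      by (simp add: increments_def zero_extension_partial_sums xbar_Suc)
  next
    case False
    with assms show ?thesis by (auto simp: increments_def space_PiM PiE_def extensional_def)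
  qed
qed

lemma recenter_compose:
  assumes "\<sigma> 0 = 0" and "\<sigma> ` {1..k} \<subseteq> {1..k}"
  shows "recenter k (\<rho> \<circ> \<sigma>) z = (\<lambda>i\<in>{1..k}. recenter k \<rho> z (\<sigma> i))"
  using assms by (auto simp: recenter_def intro!: restrict_ext)

lemma increments_along_eq:
  assumes \<tau>: "\<tau> permutes {0..k}"
  shows "increments_along k \<tau> x = increments k (recenter k \<tau> (partial_sums k x))"
proof
  fix i
  show "increments_along k \<tau> x i = increments k (recenter k \<tau> (partial_sums k x)) i"
  proof (cases "i \<in> {1..k}")
    case True
    then have "i - 1 \<le> k" "\<tau> i \<le> k" "\<tau> (i - 1) \<le> k" "\<tau> 0 \<le> k"
      using permutes_in_image[OF \<tau>, of i] permutes_in_image[OF \<tau>, of "i - 1"]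
        permutes_in_image[OF \<tau>, of 0] by auto
    then have "zero_extension (recenter k \<tau> (partial_sums k x)) j
        = xbar x (\<tau> j) - xbar x (\<tau> 0)" if "j \<in> {i, i - 1}" for j
      using that True by (auto simp: zero_extension_recenter zero_extension_partial_sums)
    with True show ?thesis
      by (simp add: increments_along_def increments_def)
  next
    case False
    then show ?thesis
      by (simp only: increments_along_def increments_def restrict_apply if_False)
  qed
qed

lemma measurable_increments:
  "increments k \<in> measurable (Pi_lborel {1..k}) (Pi_lborel {1..k})"
  unfolding increments_def
proof (rule measurable_restrict)
  fix i assume "i \<in> {1..k}"
  then have "i \<in> insert 0 {1..k}" "i - 1 \<in> insert 0 {1..k}" by auto
  from borel_measurable_diff[OF measurable_zero_extension[OF this(1)] measurable_zero_extension[OF this(2)]]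
  show "(\<lambda>x. zero_extension x i - zero_extension x (i - 1)) \<in> measurable (Pi_lborel {1..k}) lborel"
    by (simp only: measurable_lborel1)
qed

lemma lborel_preserving_partial_sums: "lborel_preserving {1..k} (partial_sums k)"
proof -
  define T where "T n x = (\<lambda>i\<in>{1..k}. if i \<le> n then xbar x i else x i)" for n x
  have "lborel_preserving {1..k} (T n)" if "n \<le> k" for n
    using that
  proof (induction n)
    case 0
    show ?case
      by (rule lborel_preserving_cong[OF lborel_preserving_id])
        (auto simp: T_def space_PiM PiE_def extensional_def)
  next
    case (Suc n)
    have c: "(\<lambda>x. zero_extension x n) \<in> borel_measurable (Pi_lborel {1..k})"
      using Suc.prems by (intro measurable_zero_extension) auto
    have "zero_extension (x(Suc n := y)) n = zero_extension x n" for x y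
      by (simp add: zero_extension_def)
    then have shear: "lborel_preserving {1..k}
        (\<lambda>x. \<lambda>j\<in>{1..k}. if j = Suc n then 1 * x (Suc n) + zero_extension x n else x j)"
      using Suc.prems by (intro lborel_preserving_shear[OF _ _ c]) auto
    have "lborel_preserving {1..k} (T n)"
      using Suc by simp
    from lborel_preserving_compose[OF this shear] show ?case
      by (rule lborel_preserving_cong) (auto simp: T_def zero_extension_def xbar_Suc intro!: restrict_ext)
  qed
  then have "lborel_preserving {1..k} (T k)" by simp
  then show ?thesis
    by (rule lborel_preserving_cong) (auto simp: T_def partial_sums_def)
qed

lemma lborel_preserving_increments: "lborel_preserving {1..k} (increments k)"
  using lborel_preserving_partial_sums measurable_increments increments_partial_sums
  by (rule lborel_preserving_left_inverse)

lemma lborel_preserving_subtract_coordinate: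
  fixes k :: nat
  assumes a: "a \<in> {1..k}"
  shows "lborel_preserving {1..k} (\<lambda>y. \<lambda>j\<in>{1..k}. if j \<noteq> a then y j - y a else y j)"
proof -
  define V where "V n y = (\<lambda>j\<in>{1..k}. if j \<le> n \<and> j \<noteq> a then y j - y a else y j)"
    for n and y :: "nat \<Rightarrow> real"
  have "lborel_preserving {1..k} (V n)" if "n \<le> k" for n
    using that
  proof (induction n)
    case 0
    show ?case
      by (rule lborel_preserving_cong[OF lborel_preserving_id])
        (auto simp: V_def space_PiM PiE_def extensional_def)
  next
    case (Suc n)
    then have IH: "lborel_preserving {1..k} (V n)" by simp
    show ?case
    proof (cases "Suc n = a")
      case True
      from IH show ?thesis
        by (rule lborel_preserving_cong) (use True in \<open>auto simp: V_def le_Suc_eq\<close>)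
    next
      case False
      have c: "(\<lambda>y. - y a) \<in> borel_measurable (Pi_lborel {1..k})"
        using measurable_Pi_lborel_component[OF a] by (rule borel_measurable_uminus)
      have "lborel_preserving {1..k}
          (\<lambda>y. \<lambda>j\<in>{1..k}. if j = Suc n then 1 * y (Suc n) + - y a else y j)"
        using Suc.prems False by (intro lborel_preserving_shear[OF _ _ c]) auto
      from lborel_preserving_compose[OF IH this] show ?thesis
        by (rule lborel_preserving_cong) (use False a in \<open>auto simp: V_def fun_eq_iff\<close>)
    qed
  qed
  then have "lborel_preserving {1..k} (V k)" by simp
  then show ?thesis
    by (rule lborel_preserving_cong) (auto simp: V_def)
qed

lemma lborel_preserving_recenter_transpose:
  assumes "a \<le> k"
  shows "lborel_preserving {1..k} (recenter k (Transposition.transpose 0 a))"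
proof (cases "a = 0")
  case True
  show ?thesis
    by (rule lborel_preserving_cong[OF lborel_preserving_id])
      (auto simp: True recenter_def zero_extension_def space_PiM PiE_def extensional_def)
next
  case False
  with assms have a: "a \<in> {1..k}" by simp
  have "lborel_preserving {1..k} (\<lambda>y. \<lambda>j\<in>{1..k}. if j = a then -1 * y a + 0 else y j)"
    using a by (intro lborel_preserving_shear) auto
  from lborel_preserving_compose[OF lborel_preserving_subtract_coordinate[OF a] this]
  show ?thesis
    by (rule lborel_preserving_cong)
      (use a in \<open>auto simp: recenter_def zero_extension_def transpose_def fun_eq_iff\<close>)
qed

lemma lborel_preserving_recenter:
  assumes \<tau>: "\<tau> permutes {0..k}"
  shows "lborel_preserving {1..k} (recenter k \<tau>)"
proof -
  define a where "a = \<tau> 0"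
  define \<sigma> where "\<sigma> = Transposition.transpose 0 a \<circ> \<tau>"
  have a: "a \<le> k" using permutes_in_image[OF \<tau>, of 0] by (simp add: a_def)
  have "\<sigma> permutes {0..k}"
    unfolding \<sigma>_def by (rule permutes_compose[OF \<tau> permutes_swap_id]) (use a in auto)
  have \<sigma>0: "\<sigma> 0 = 0" unfolding \<sigma>_def a_def by simp
  from \<open>\<sigma> permutes {0..k}\<close> have "\<sigma> permutes {1..k}"
    by (rule permutes_superset) (use \<sigma>0 in \<open>auto simp: Suc_le_eq\<close>)
  then have \<sigma>: "bij_betw \<sigma> {1..k} {1..k}" by (rule permutes_imp_bij)
  have "\<tau> = Transposition.transpose 0 a \<circ> \<sigma>" by (simp add: \<sigma>_def fun_eq_iff)
  then have eq: "recenter k \<tau> z = (\<lambda>i\<in>{1..k}. recenter k (Transposition.transpose 0 a) z (\<sigma> i))" for z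
    using \<sigma>0 \<sigma> by (simp add: recenter_compose bij_betw_def)
  from lborel_preserving_compose[OF lborel_preserving_recenter_transpose[OF a]
      lborel_preserving_reindex[OF _ \<sigma>]]
  show ?thesis
    by (rule lborel_preserving_cong) (simp_all add: eq)
qed

lemma lborel_preserving_increments_along:
  assumes "\<tau> permutes {0..k}"
  shows "lborel_preserving {1..k} (increments_along k \<tau>)"
  using lborel_preserving_compose[OF lborel_preserving_compose[OF lborel_preserving_partial_sums
      lborel_preserving_recenter[OF assms]] lborel_preserving_increments]
  by (rule lborel_preserving_cong) (simp add: increments_along_eq[OF assms])

section \<open>Ranking permutations\<close>

lemma strict_mono_on_atLeastAtMost_iff_sorted_wrt:
  "strict_mono_on {0..k} g \<longleftrightarrow> sorted_wrt (<) (map g [0..<Suc k])"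
  by (auto simp: strict_mono_on_def sorted_wrt_iff_nth_less simp del: upt_Suc)

lemma inj_on_if_ranking:
  fixes f :: "nat \<Rightarrow> 'a::linorder"
  assumes \<tau>: "\<tau> permutes {0..k}" and mono: "strict_mono_on {0..k} (\<lambda>j. f (inv \<tau> j))"
  shows "inj_on f {0..k}"
proof (rule inj_onI)
  fix a b assume ab: "a \<in> {0..k}" "b \<in> {0..k}" "f a = f b"
  then have "f (inv \<tau> (\<tau> a)) = f (inv \<tau> (\<tau> b))"
    by (simp add: permutes_inverses(2)[OF \<tau>])
  moreover have "\<tau> a \<in> {0..k}" "\<tau> b \<in> {0..k}"
    using ab by (simp_all only: permutes_in_image[OF \<tau>])
  ultimately have "\<tau> a = \<tau> b"
    using strict_mono_on_imp_inj_on[OF mono] by (auto dest: inj_onD)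
  then show "a = b" using permutes_inj[OF \<tau>] by (auto dest: injD)
qed

lemma ranking_unique:
  fixes f :: "nat \<Rightarrow> 'a::linorder"
  assumes \<tau>: "\<tau> permutes {0..k}" "strict_mono_on {0..k} (\<lambda>j. f (inv \<tau> j))"
    and \<tau>': "\<tau>' permutes {0..k}" "strict_mono_on {0..k} (\<lambda>j. f (inv \<tau>' j))"
  shows "\<tau> = \<tau>'"
proof -
  have set_eq: "set (map (\<lambda>j. f (inv \<sigma> j)) [0..<Suc k]) = f ` {0..k}" if "\<sigma> permutes {0..k}" for \<sigma>
  proof -
    have "set (map (\<lambda>j. f (inv \<sigma> j)) [0..<Suc k]) = f ` inv \<sigma> ` {0..k}"
      by (auto simp del: upt_Suc)
    then show ?thesis using permutes_image[OF permutes_inv[OF that]] by simp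
  qed
  have "map (\<lambda>j. f (inv \<tau> j)) [0..<Suc k] = map (\<lambda>j. f (inv \<tau>' j)) [0..<Suc k]"
    using set_eq[OF \<tau>(1)] set_eq[OF \<tau>'(1)] \<tau>(2) \<tau>'(2) by (intro strict_sorted_equal)
      (simp_all only: strict_mono_on_atLeastAtMost_iff_sorted_wrt)
  then have f_eq: "f (inv \<tau> j) = f (inv \<tau>' j)" if "j \<in> {0..k}" for j
    using that by (simp add: map_eq_conv del: upt_Suc)
  have inv_in: "inv \<tau> j \<in> {0..k}" "inv \<tau>' j \<in> {0..k}" if "j \<in> {0..k}" for j
    using that by (simp_all only: permutes_in_image[OF permutes_inv[OF \<tau>(1)]]
        permutes_in_image[OF permutes_inv[OF \<tau>'(1)]])
  have "inv \<tau> j = inv \<tau>' j" if "j \<in> {0..k}" for j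
    using inj_onD[OF inj_on_if_ranking[OF \<tau>] f_eq[OF that] inv_in[OF that]] .
  moreover have "inv \<tau> j = inv \<tau>' j" if "j \<notin> {0..k}" for j
    by (simp only: permutes_not_in[OF permutes_inv[OF \<tau>(1)] that]
        permutes_not_in[OF permutes_inv[OF \<tau>'(1)] that])
  ultimately have "inv \<tau> = inv \<tau>'" by blast
  then show ?thesis
    by (metis permutes_inv_inv[OF \<tau>(1)] permutes_inv_inv[OF \<tau>'(1)])
qed

lemma ranking_exists:
  fixes f :: "nat \<Rightarrow> 'a::linorder"
  assumes inj: "inj_on f {0..k}"
  obtains \<tau> where "\<tau> permutes {0..k}" "strict_mono_on {0..k} (\<lambda>j. f (inv \<tau> j))"
proof -
  let ?S = "{0..k}"
  define L where "L = sorted_list_of_set (f ` ?S)"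
  have lenL: "length L = Suc k" unfolding L_def using card_image[OF inj] by simp
  have setL: "set L = f ` ?S" unfolding L_def by simp
  have sL: "sorted_wrt (<) L" unfolding L_def by (rule strict_sorted_list_of_set)
  define \<sigma> where "\<sigma> j = (if j \<in> ?S then the_inv_into ?S f (L ! j) else j)" for j
  have L_in: "L ! j \<in> f ` ?S" if "j \<in> ?S" for j using that lenL setL nth_mem[of j L] by auto
  have \<sigma>_in: "\<sigma> j \<in> ?S" if "j \<in> ?S" for j
    using that the_inv_into_into[OF inj L_in[OF that] subset_refl] by (simp add: \<sigma>_def)
  have f\<sigma>: "f (\<sigma> j) = L ! j" if "j \<in> ?S" for j
    using that L_in[OF that] inj by (simp add: \<sigma>_def f_the_inv_into_f)
  have inj_\<sigma>: "inj_on \<sigma> ?S"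
  proof (rule inj_onI)
    fix i j assume ij: "i \<in> ?S" "j \<in> ?S" "\<sigma> i = \<sigma> j"
    then have "L ! i = L ! j" using f\<sigma> by metis
    then show "i = j" using sL ij lenL by (simp add: strict_sorted_iff nth_eq_iff_index_eq)
  qed
  moreover have "\<sigma> ` ?S = ?S"
    using \<sigma>_in inj_\<sigma> by (intro endo_inj_surj) auto
  ultimately have \<sigma>: "\<sigma> permutes ?S"
    by (intro bij_imp_permutes) (simp_all add: bij_betw_def \<sigma>_def)
  have "strict_mono_on ?S (\<lambda>j. f (\<sigma> j))"
    by (rule strict_mono_onI) (use f\<sigma> sorted_wrt_nth_less[OF sL] lenL in auto)
  with \<sigma> show ?thesis
    by (intro that[of "inv \<sigma>"]) (simp_all add: permutes_inv permutes_inv_inv)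
qed

lemma sum_ranking_indicator:
  fixes f :: "nat \<Rightarrow> 'a::linorder"
  shows "(\<Sum>\<tau> | \<tau> permutes {0..k}. if strict_mono_on {0..k} (\<lambda>j. f (inv \<tau> j)) then 1 else 0 :: ennreal)
    = (if inj_on f {0..k} then 1 else 0)"
proof (cases "inj_on f {0..k}")
  case True
  then obtain \<tau>\<^sub>0 where \<tau>\<^sub>0: "\<tau>\<^sub>0 permutes {0..k}" "strict_mono_on {0..k} (\<lambda>j. f (inv \<tau>\<^sub>0 j))"
    by (rule ranking_exists)
  have "(\<Sum>\<tau> | \<tau> permutes {0..k}. if strict_mono_on {0..k} (\<lambda>j. f (inv \<tau> j)) then 1 else 0 :: ennreal)
      = (\<Sum>\<tau> | \<tau> permutes {0..k}. if \<tau> = \<tau>\<^sub>0 then 1 else 0)"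
    using \<tau>\<^sub>0 by (intro sum.cong refl) (auto dest: ranking_unique)
  also have "\<dots> = 1"
    using \<tau>\<^sub>0(1) by (simp add: finite_permutations)
  finally show ?thesis using True by simp
next
  case False
  then show ?thesis by (auto intro!: sum.neutral dest: inj_on_if_ranking)
qed

section \<open>Gaps of partial sums\<close>

lemma xbar_le_xbar:
  assumes "i \<le> j" and "\<forall>m\<in>{1..j}. 0 \<le> x m"
  shows "xbar x i \<le> xbar x j"
  unfolding xbar_def using assms by (intro sum_mono2) auto

lemma xbar_less_xbar:
  assumes "i < j" and "\<forall>m\<in>{1..j}. 0 < x m"
  shows "xbar x i < xbar x j"
proof -
  have "xbar x i \<le> xbar x (j - 1)"
    using assms by (intro xbar_le_xbar) (auto simp: less_imp_le)
  also have "\<dots> < xbar x j"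
    using assms xbar_Suc[of x "j - 1"] by simp
  finally show ?thesis .
qed

lemma strict_mono_on_xbar_iff: "strict_mono_on {0..k} (xbar x) \<longleftrightarrow> (\<forall>i\<in>{1..k}. 0 < x i)"
proof
  assume mono: "strict_mono_on {0..k} (xbar x)"
  show "\<forall>i\<in>{1..k}. 0 < x i"
  proof
    fix i assume i: "i \<in> {1..k}"
    then have "xbar x (i - 1) < xbar x i" by (intro strict_mono_onD[OF mono]) auto
    with i show "0 < x i" using xbar_Suc[of x "i - 1"] by simp
  qed
qed (auto intro!: strict_mono_onI xbar_less_xbar)

lemma xbar_increments_along:
  "i \<le> k \<Longrightarrow> xbar (increments_along k \<tau> x) i = xbar x (\<tau> i) - xbar x (\<tau> 0)"
  by (induction i) (simp_all add: xbar_Suc increments_along_def)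

lemma ranking_increments_along_iff:
  assumes \<tau>: "\<tau> permutes {0..k}"
  shows "strict_mono_on {0..k} (\<lambda>j. xbar (increments_along k \<tau> x) (inv \<tau> j))
    \<longleftrightarrow> (\<forall>i\<in>{1..k}. 0 < x i)"
proof -
  have "xbar (increments_along k \<tau> x) (inv \<tau> j) = xbar x j - xbar x (\<tau> 0)" if "j \<in> {0..k}" for j
  proof -
    have "inv \<tau> j \<in> {0..k}"
      using that by (simp only: permutes_in_image[OF permutes_inv[OF \<tau>]])
    then show ?thesis
      by (simp add: xbar_increments_along permutes_inverses(1)[OF \<tau>])
  qed
  then have "strict_mono_on {0..k} (\<lambda>j. xbar (increments_along k \<tau> x) (inv \<tau> j))
      \<longleftrightarrow> strict_mono_on {0..k} (xbar x)"
    by (auto simp: strict_mono_on_def)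
  then show ?thesis by (simp add: strict_mono_on_xbar_iff)
qed

lemma gaps_seq_mset_cong:
  assumes "mset (map l [0..<Suc k]) = mset (map l' [0..<Suc k])"
  shows "gaps_seq k l = gaps_seq k l'"
proof -
  have "sort (map l [0..<Suc k]) = sort (map l' [0..<Suc k])"
    by (rule properties_for_sort) (use assms in \<open>simp_all del: upt_Suc\<close>)
  then show ?thesis by (simp add: gaps_seq_def del: upt_Suc)
qed

lemma gaps_seq_permute:
  assumes \<tau>: "\<tau> permutes {0..k}"
  shows "gaps_seq k (\<lambda>i. l (\<tau> i)) = gaps_seq k l"
proof (rule gaps_seq_mset_cong)
  have "mset (map (\<lambda>i. l (\<tau> i)) [0..<Suc k]) = image_mset l (image_mset \<tau> (mset_set {0..<Suc k}))"
    by (simp add: mset_map multiset.map_comp comp_def del: upt_Suc)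
  also have "image_mset \<tau> (mset_set {0..<Suc k}) = mset_set {0..<Suc k}"
    using permutes_inj_on[OF \<tau>] permutes_image[OF \<tau>]
    by (simp add: image_mset_mset_set atLeastLessThanSuc_atLeastAtMost)
  finally show "mset (map (\<lambda>i. l (\<tau> i)) [0..<Suc k]) = mset (map l [0..<Suc k])"
    by (simp add: mset_map del: upt_Suc)
qed

lemma gaps_seq_add_const: "gaps_seq k (\<lambda>i. l i + c) = gaps_seq k l"
proof -
  have sort_shift: "sort (map (\<lambda>i. l i + c) [0..<Suc k]) = map (\<lambda>v. v + c) (sort (map l [0..<Suc k]))"
    by (rule properties_for_sort) (simp_all add: sorted_map multiset.map_comp comp_def del: upt_Suc)
  have "map (\<lambda>v. v + c) xs ! i - map (\<lambda>v. v + c) xs ! (i - 1) = xs ! i - xs ! (i - 1)"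
    if "i \<in> {1..k}" "length xs = Suc k" for i and xs :: "real list"
  proof -
    from that have "i < length xs" "i - 1 < length xs" by auto
    then show ?thesis by (simp add: nth_map)
  qed
  then show ?thesis
    unfolding gaps_seq_def Let_def sort_shift by (intro restrict_ext) (simp del: upt_Suc)
qed

lemma gaps_seq_xbar:
  assumes "x \<in> extensional {1..k}" and "\<forall>i\<in>{1..k}. 0 \<le> x i"
  shows "gaps_seq k (xbar x) = x"
proof -
  have "sorted (map (xbar x) [0..<Suc k])"
    using assms(2) by (auto simp: sorted_iff_nth_mono intro!: xbar_le_xbar simp del: upt_Suc)
  then have sorted_id: "sort (map (xbar x) [0..<Suc k]) = map (xbar x) [0..<Suc k]"
    by (rule sorted_sort_id)
  show ?thesis
  proof (rule extensionalityI[OF _ assms(1)])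
    show "gaps_seq k (xbar x) \<in> extensional {1..k}" by (simp add: gaps_seq_def)
    fix i assume i: "i \<in> {1..k}"
    then obtain m where m: "i = Suc m" "m < Suc k" by (cases i) auto
    then have "map (xbar x) [0..<Suc k] ! i = xbar x i" "map (xbar x) [0..<Suc k] ! m = xbar x m"
      using i m by (auto simp del: upt_Suc)
    with i m show "gaps_seq k (xbar x) i = x i"
      by (simp add: gaps_seq_def sorted_id xbar_Suc del: upt_Suc)
  qed
qed

lemma gaps_seq_increments_along:
  assumes \<tau>: "\<tau> permutes {0..k}"
    and x: "x \<in> extensional {1..k}" "\<forall>i\<in>{1..k}. 0 \<le> x i"
  shows "gaps_seq k (xbar (increments_along k \<tau> x)) = x"
proof -
  have "gaps_seq k (xbar (increments_along k \<tau> x)) = gaps_seq k (\<lambda>i. xbar x (\<tau> i) + - xbar x (\<tau> 0))"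
    by (intro gaps_seq_mset_cong arg_cong[where f=mset] map_cong)
      (simp_all add: xbar_increments_along del: upt_Suc)
  also have "\<dots> = gaps_seq k (xbar x)"
    by (simp only: gaps_seq_add_const gaps_seq_permute[OF \<tau>])
  also have "\<dots> = x"
    by (rule gaps_seq_xbar[OF x])
  finally show ?thesis .
qed

section \<open>Measurability and null sets\<close>

lemma sorted_nth_le_iff:
  fixes xs :: "'a::linorder list"
  assumes "sorted xs" and "i < length xs"
  shows "xs ! i \<le> a \<longleftrightarrow> i < length (filter (\<lambda>v. v \<le> a) xs)"
  using assms
proof (induction xs arbitrary: i)
  case (Cons x xs)
  show ?case
  proof (cases "x \<le> a")
    case True
    with Cons show ?thesis by (cases i) auto
  next
    case False
    with Cons.prems(1) have "\<forall>v\<in>set (x # xs). \<not> v \<le> a" by auto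
    moreover have "(x # xs) ! i \<in> set (x # xs)" using Cons.prems(2) by (rule nth_mem)
    ultimately show ?thesis by (auto simp: filter_empty_conv)
  qed
qed simp

lemma measurable_sort_nth:
  fixes f :: "nat \<Rightarrow> 'a \<Rightarrow> real"
  assumes f: "\<And>j. j \<le> k \<Longrightarrow> f j \<in> borel_measurable N" and i: "i \<le> k"
  shows "(\<lambda>w. sort (map (\<lambda>j. f j w) [0..<Suc k]) ! i) \<in> borel_measurable N"
proof (subst borel_measurable_iff_le, intro allI)
  fix a :: real
  have le_iff: "sort (map (\<lambda>j. f j w) [0..<Suc k]) ! i \<le> a \<longleftrightarrow>
      real i < (\<Sum>j<Suc k. if f j w \<le> a then 1 else 0)" for w
  proof -
    have count: "real (length (filter (\<lambda>v. v \<le> a) (map (\<lambda>j. f j w) [0..<n])))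
        = (\<Sum>j<n. if f j w \<le> a then 1 else 0)" for n
      by (induction n) simp_all
    have "sort (map (\<lambda>j. f j w) [0..<Suc k]) ! i \<le> a \<longleftrightarrow>
        i < length (filter (\<lambda>v. v \<le> a) (sort (map (\<lambda>j. f j w) [0..<Suc k])))"
      using i by (intro sorted_nth_le_iff) (auto simp del: upt_Suc)
    also have "length (filter (\<lambda>v. v \<le> a) (sort (map (\<lambda>j. f j w) [0..<Suc k])))
        = length (filter (\<lambda>v. v \<le> a) (map (\<lambda>j. f j w) [0..<Suc k]))"
      by (simp only: filter_sort length_sort)
    finally show ?thesis
      by (simp only: count[symmetric] of_nat_less_iff)
  qed
  have eq: "{w \<in> space N. sort (map (\<lambda>j. f j w) [0..<Suc k]) ! i \<le> a}
      = {w \<in> space N. real i < (\<Sum>j<Suc k. if f j w \<le> a then 1 else 0)}"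
    by (simp only: le_iff)
  have count_measurable: "(\<lambda>w. \<Sum>j<Suc k. if f j w \<le> a then 1 else 0 :: real) \<in> borel_measurable N"
  proof (rule borel_measurable_sum)
    fix j assume "j \<in> {..<Suc k}"
    then have [measurable]: "f j \<in> borel_measurable N" using f by auto
    show "(\<lambda>w. if f j w \<le> a then 1 else 0 :: real) \<in> borel_measurable N" by measurable
  qed
  show "{w \<in> space N. sort (map (\<lambda>j. f j w) [0..<Suc k]) ! i \<le> a} \<in> sets N"
    unfolding eq by (rule count_measurable[unfolded borel_measurable_iff_greater, rule_format])
qed

lemma measurable_gaps_seq:
  fixes f :: "nat \<Rightarrow> 'a \<Rightarrow> real"
  assumes "\<And>j. j \<le> k \<Longrightarrow> f j \<in> borel_measurable N"
  shows "(\<lambda>w. gaps_seq k (\<lambda>j. f j w)) \<in> measurable N (Pi_lborel {1..k})"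
  unfolding gaps_seq_def Let_def
proof (rule measurable_restrict)
  fix i assume "i \<in> {1..k}"
  with assms have "(\<lambda>w. sort (map (\<lambda>j. f j w) [0..<Suc k]) ! i
      - sort (map (\<lambda>j. f j w) [0..<Suc k]) ! (i - 1)) \<in> borel_measurable N"
    by (intro borel_measurable_diff measurable_sort_nth) auto
  then show "(\<lambda>w. sort (map (\<lambda>j. f j w) [0..<Suc k]) ! i
      - sort (map (\<lambda>j. f j w) [0..<Suc k]) ! (i - 1)) \<in> measurable N lborel"
    by (simp only: measurable_lborel1)
qed

lemma null_sets_Pi_lborel_graph:
  assumes I: "finite I" "b \<in> I" and c[measurable]: "c \<in> borel_measurable (Pi_lborel I)"
    and c_indep: "\<And>x y. c (x(b := y)) = c x"
  shows "{x \<in> space (Pi_lborel I). x b = c x} \<in> null_sets (Pi_lborel I)"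
proof -
  define J where "J = I - {b}"
  have IJ: "I = insert b J" "b \<notin> J" "finite J" using I by (auto simp: J_def)
  let ?G = "{x \<in> space (Pi_lborel I). x b = c x}"
  have [measurable]: "(\<lambda>x. x b) \<in> borel_measurable (Pi_lborel I)"
    using I(2) by (rule measurable_Pi_lborel_component)
  have G: "?G \<in> sets (Pi_lborel I)" by measurable
  have "emeasure (Pi_lborel I) ?G = (\<integral>\<^sup>+x. indicator ?G x \<partial>Pi_lborel I)"
    using G by simp
  also have "\<dots> = (\<integral>\<^sup>+x. (\<integral>\<^sup>+y. indicator ?G (x(b := y)) \<partial>lborel) \<partial>Pi_lborel J)"
    using Pi_lborel.product_nn_integral_insert[OF IJ(3,2), of "indicator ?G"] G IJ(1) by simp
  also have "\<dots> = (\<integral>\<^sup>+x. (\<integral>\<^sup>+y. indicator {c x} y \<partial>lborel) \<partial>Pi_lborel J)"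
  proof (rule nn_integral_cong)
    fix x assume x: "x \<in> space (Pi_lborel J)"
    then have "x(b := y) \<in> space (Pi_lborel I)" for y
      using IJ by (auto simp: space_PiM PiE_def extensional_def)
    then show "(\<integral>\<^sup>+y. indicator ?G (x(b := y)) \<partial>lborel) = (\<integral>\<^sup>+y. indicator {c x} y \<partial>lborel)"
      by (intro nn_integral_cong) (auto simp: c_indep indicator_def)
  qed
  also have "\<dots> = 0" by simp
  finally show ?thesis using G by (simp add: null_sets_def)
qed

lemma AE_inj_on_xbar: "AE d in Pi_lborel {1..k}. inj_on (xbar d) {0..k}"
proof -
  have "AE d in Pi_lborel {1..k}. a < b \<longrightarrow> xbar d a \<noteq> xbar d b" if "b \<in> {0..k}" for a b
  proof (cases "a < b")
    case True
    then obtain m where m: "b = Suc m" by (cases b) auto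
    with that have b: "b \<in> {1..k}" by simp
    have c: "(\<lambda>x. xbar x a - xbar x m) \<in> borel_measurable (Pi_lborel {1..k})"
      using that True m by (intro borel_measurable_diff measurable_xbar) auto
    have "xbar (x(b := y)) j = xbar x j" if "j < b" for x y j
      using that unfolding xbar_def by (intro sum.cong) auto
    then have "xbar (x(b := y)) a - xbar (x(b := y)) m = xbar x a - xbar x m" for x y
      using True m by simp
    from null_sets_Pi_lborel_graph[OF _ b c this]
    show ?thesis
      by (rule AE_I') (auto simp: m xbar_Suc)
  qed simp
  then have "AE d in Pi_lborel {1..k}. \<forall>b\<in>{0..k}. \<forall>a\<in>{0..k}. a < b \<longrightarrow> xbar d a \<noteq> xbar d b"
    by (intro AE_finite_allI) simp_all
  then show ?thesis
  proof (rule AE_mp, intro AE_I2 impI)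
    fix d assume H: "\<forall>b\<in>{0..k}. \<forall>a\<in>{0..k}. a < b \<longrightarrow> xbar d a \<noteq> xbar d b"
    show "inj_on (xbar d) {0..k}"
    proof (rule inj_onI)
      fix a b assume "a \<in> {0..k}" "b \<in> {0..k}" "xbar d a = xbar d b"
      with H show "a = b" by (metis linorder_neqE_nat)
    qed
  qed
qed

lemma PiM_density_lborel:
  fixes \<phi> :: "'i \<Rightarrow> real \<Rightarrow> ennreal"
  assumes I: "finite I" and \<phi>: "\<And>i. i \<in> I \<Longrightarrow> \<phi> i \<in> borel_measurable borel"
    and sf: "\<And>i. i \<in> I \<Longrightarrow> sigma_finite_measure (density lborel (\<phi> i))"
  shows "PiM I (\<lambda>i. density lborel (\<phi> i)) = density (Pi_lborel I) (\<lambda>x. \<Prod>i\<in>I. \<phi> i (x i))"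
proof -
  define M where "M i = (if i \<in> I then density lborel (\<phi> i) else lborel)" for i
  interpret M: product_sigma_finite M
    unfolding product_sigma_finite_def M_def using sf lborel.sigma_finite_measure_axioms by auto
  have "PiM I (\<lambda>i. density lborel (\<phi> i)) = PiM I M"
    by (rule PiM_cong) (auto simp: M_def)
  also have "\<dots> = density (Pi_lborel I) (\<lambda>x. \<Prod>i\<in>I. \<phi> i (x i))"
  proof (rule M.PiM_eqI[OF I, symmetric])
    show "sets (density (Pi_lborel I) (\<lambda>x. \<Prod>i\<in>I. \<phi> i (x i))) = sets (PiM I M)"
      by (simp, rule sets_PiM_cong) (auto simp: M_def)
    fix A :: "'i \<Rightarrow> real set" assume "\<And>i. i \<in> I \<Longrightarrow> A i \<in> sets (M i)"
    then have A: "\<And>i. i \<in> I \<Longrightarrow> A i \<in> sets borel" by (auto simp: M_def)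
    have \<phi>x: "(\<lambda>x. \<phi> i (x i)) \<in> borel_measurable (Pi_lborel I)" if "i \<in> I" for i
      using measurable_comp[OF measurable_Pi_lborel_component[OF that] \<phi>[OF that]]
      by (simp add: comp_def)
    have "emeasure (density (Pi_lborel I) (\<lambda>x. \<Prod>i\<in>I. \<phi> i (x i))) (Pi\<^sub>E I A)
        = (\<integral>\<^sup>+x. (\<Prod>i\<in>I. \<phi> i (x i)) * indicator (Pi\<^sub>E I A) x \<partial>Pi_lborel I)"
      using A I \<phi>x by (subst emeasure_density) (auto intro!: sets_PiM_I_finite borel_measurable_prod_ennreal)
    also have "\<dots> = (\<integral>\<^sup>+x. (\<Prod>i\<in>I. \<phi> i (x i) * indicator (A i) (x i)) \<partial>Pi_lborel I)"
      by (intro nn_integral_cong)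
        (auto simp: prod.distrib indicator_def prod_zero_iff I space_PiM PiE_def Pi_def)
    also have "\<dots> = (\<Prod>i\<in>I. (\<integral>\<^sup>+y. \<phi> i y * indicator (A i) y \<partial>lborel))"
      using A \<phi> by (intro Pi_lborel.product_nn_integral_prod I) auto
    also have "\<dots> = (\<Prod>i\<in>I. emeasure (M i) (A i))"
      using A \<phi> by (intro prod.cong refl) (simp add: M_def emeasure_density)
    finally show "emeasure (density (Pi_lborel I) (\<lambda>x. \<Prod>i\<in>I. \<phi> i (x i))) (Pi\<^sub>E I A)
      = (\<Prod>i\<in>I. emeasure (M i) (A i))" .
  qed
  finally show ?thesis .
qed

section \<open>The density of the gaps\<close>

lemma prod_indicator_eq:
  "finite A \<Longrightarrow> (\<Prod>i\<in>A. if P i then 1 else 0 :: 'a::comm_semiring_1) = (if \<forall>i\<in>A. P i then 1 else 0)"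
  by (induction A rule: finite_induct) auto

lemma measurable_increments_along:
  "\<tau> permutes {0..k} \<Longrightarrow> increments_along k \<tau> \<in> measurable (Pi_lborel {1..k}) (Pi_lborel {1..k})"
  by (rule lborel_preserving_measurable[OF lborel_preserving_increments_along])

definition gaps_density :: "((nat \<Rightarrow> real) \<Rightarrow> ennreal) \<Rightarrow> nat \<Rightarrow> (nat \<Rightarrow> real) \<Rightarrow> ennreal" where
  "gaps_density F k x =
    (\<Sum>\<tau> | \<tau> permutes {0..k}. F (increments_along k \<tau> x) * (\<Prod>i=1..k. if 0 < x i then 1 else 0))"

lemma measurable_positive_indicator:
  "(\<lambda>x. \<Prod>i=1..k. if 0 < x i then 1 else 0 :: ennreal) \<in> borel_measurable (Pi_lborel {1..k})"
proof (rule borel_measurable_prod_ennreal)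
  fix i assume "i \<in> {1..k}"
  then have [measurable]: "(\<lambda>x. x i) \<in> borel_measurable (Pi_lborel {1..k})"
    by (rule measurable_Pi_lborel_component)
  show "(\<lambda>x. if 0 < x i then 1 else 0 :: ennreal) \<in> borel_measurable (Pi_lborel {1..k})"
    by measurable
qed

lemma measurable_gaps_density:
  assumes [measurable]: "F \<in> borel_measurable (Pi_lborel {1..k})"
  shows "gaps_density F k \<in> borel_measurable (Pi_lborel {1..k})"
  unfolding gaps_density_def
proof (rule borel_measurable_sum)
  fix \<tau> assume "\<tau> \<in> {\<tau>. \<tau> permutes {0..k}}"
  then have [measurable]: "increments_along k \<tau> \<in> measurable (Pi_lborel {1..k}) (Pi_lborel {1..k})"
    by (intro measurable_increments_along) simp
  note measurable_positive_indicator[measurable]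
  show "(\<lambda>x. F (increments_along k \<tau> x) * (\<Prod>i=1..k. if 0 < x i then 1 else 0))
      \<in> borel_measurable (Pi_lborel {1..k})"
    by measurable
qed

lemma measurable_ranking_indicator:
  assumes \<tau>: "\<tau> permutes {0..k}"
  shows "(\<lambda>d. if strict_mono_on {0..k} (\<lambda>j. xbar d (inv \<tau> j)) then 1 else 0 :: ennreal)
    \<in> borel_measurable (Pi_lborel {1..k})"
proof -
  have [measurable]: "(\<lambda>d. xbar d (inv \<tau> j)) \<in> borel_measurable (Pi_lborel {1..k})" if "j \<in> {0..k}" for j
  proof -
    have "inv \<tau> j \<in> {0..k}"
      using that by (simp only: permutes_in_image[OF permutes_inv[OF \<tau>]])
    then show ?thesis by (intro measurable_xbar) simp
  qed
  have "{d \<in> space (Pi_lborel {1..k}). strict_mono_on {0..k} (\<lambda>j. xbar d (inv \<tau> j))}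
      = {d \<in> space (Pi_lborel {1..k}). \<forall>i\<in>{0..k}. \<forall>j\<in>{0..k}. i < j \<longrightarrow> xbar d (inv \<tau> i) < xbar d (inv \<tau> j)}"
    by (auto simp: strict_mono_on_def)
  also have "\<dots> \<in> sets (Pi_lborel {1..k})" by measurable
  finally have [measurable]: "Measurable.pred (Pi_lborel {1..k}) (\<lambda>d. strict_mono_on {0..k} (\<lambda>j. xbar d (inv \<tau> j)))"
    by (simp add: pred_def)
  show ?thesis by measurable
qed

lemma measurable_gaps_seq_xbar:
  "(\<lambda>d. gaps_seq k (xbar d)) \<in> measurable (Pi_lborel {1..k}) (Pi_lborel {1..k})"
  using measurable_gaps_seq[of k "\<lambda>j d. xbar d j"] measurable_xbar by simp

text \<open>On the set of vectors whose partial sums are ranked by \<open>\<tau>\<close>, the gaps are recovered by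
  the volume-preserving map \<open>increments_along k \<tau>\<close>.\<close>
lemma nn_integral_increments_along:
  assumes \<tau>: "\<tau> permutes {0..k}"
    and [measurable]: "F \<in> borel_measurable (Pi_lborel {1..k})" "h \<in> borel_measurable (Pi_lborel {1..k})"
  shows "(\<integral>\<^sup>+x. h x * (F (increments_along k \<tau> x) * (\<Prod>i=1..k. if 0 < x i then 1 else 0))
      \<partial>Pi_lborel {1..k})
    = (\<integral>\<^sup>+d. h (gaps_seq k (xbar d)) * F d *
        (if strict_mono_on {0..k} (\<lambda>j. xbar d (inv \<tau> j)) then 1 else 0) \<partial>Pi_lborel {1..k})"
proof -
  define H where "H d = h (gaps_seq k (xbar d)) * F d *
    (if strict_mono_on {0..k} (\<lambda>j. xbar d (inv \<tau> j)) then 1 else 0)" for d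
  note [measurable] = measurable_ranking_indicator[OF \<tau>] measurable_gaps_seq_xbar
  have H: "H \<in> borel_measurable (Pi_lborel {1..k})"
    unfolding H_def by measurable
  have "h x * (F (increments_along k \<tau> x) * (\<Prod>i=1..k. if 0 < x i then 1 else 0))
      = H (increments_along k \<tau> x)" if "x \<in> space (Pi_lborel {1..k})" for x
  proof (cases "\<forall>i\<in>{1..k}. 0 < x i")
    case True
    moreover have "x \<in> extensional {1..k}" using that by (simp add: space_PiM PiE_def)
    ultimately show ?thesis
      by (simp add: H_def prod_indicator_eq ranking_increments_along_iff[OF \<tau>]
          gaps_seq_increments_along[OF \<tau>] less_imp_le mult.commute)
  next
    case False
    then show ?thesis
      by (auto simp: H_def prod_indicator_eq ranking_increments_along_iff[OF \<tau>])
  qed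
  then have "(\<integral>\<^sup>+x. h x * (F (increments_along k \<tau> x) * (\<Prod>i=1..k. if 0 < x i then 1 else 0))
      \<partial>Pi_lborel {1..k}) = (\<integral>\<^sup>+x. H (increments_along k \<tau> x) \<partial>Pi_lborel {1..k})"
    by (rule nn_integral_cong)
  also have "\<dots> = (\<integral>\<^sup>+d. H d \<partial>Pi_lborel {1..k})"
    using lborel_preserving_increments_along[OF \<tau>] H by (rule lborel_preserving_nn_integral)
  finally show ?thesis by (simp only: H_def)
qed

text \<open>Split the integral according to the permutation ranking the partial sums, which is
  unique almost everywhere.\<close>
lemma nn_integral_gaps_seq_xbar:
  assumes F[measurable]: "F \<in> borel_measurable (Pi_lborel {1..k})"
    and h[measurable]: "h \<in> borel_measurable (Pi_lborel {1..k})"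
  shows "(\<integral>\<^sup>+d. h (gaps_seq k (xbar d)) * F d \<partial>Pi_lborel {1..k})
    = (\<integral>\<^sup>+x. h x * gaps_density F k x \<partial>Pi_lborel {1..k})"
proof -
  let ?P = "{\<tau>. \<tau> permutes {0..k}}"
  let ?ranks = "\<lambda>\<tau> d. strict_mono_on {0..k} (\<lambda>j. xbar d (inv \<tau> j))"
  note [measurable] = measurable_gaps_seq_xbar measurable_positive_indicator
  have "(\<integral>\<^sup>+x. h x * gaps_density F k x \<partial>Pi_lborel {1..k})
      = (\<Sum>\<tau>\<in>?P. \<integral>\<^sup>+x. h x * (F (increments_along k \<tau> x) * (\<Prod>i=1..k. if 0 < x i then 1 else 0))
          \<partial>Pi_lborel {1..k})"
    unfolding gaps_density_def sum_distrib_left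
  proof (rule nn_integral_sum)
    fix \<tau> assume "\<tau> \<in> ?P"
    then have [measurable]: "increments_along k \<tau> \<in> measurable (Pi_lborel {1..k}) (Pi_lborel {1..k})"
      by (intro measurable_increments_along) simp
    show "(\<lambda>x. h x * (F (increments_along k \<tau> x) * (\<Prod>i=1..k. if 0 < x i then 1 else 0)))
      \<in> borel_measurable (Pi_lborel {1..k})"
      by measurable
  qed
  also have "\<dots> = (\<Sum>\<tau>\<in>?P. \<integral>\<^sup>+d. h (gaps_seq k (xbar d)) * F d * (if ?ranks \<tau> d then 1 else 0)
      \<partial>Pi_lborel {1..k})"
    by (intro sum.cong refl nn_integral_increments_along F h) simp
  also have "\<dots> = (\<integral>\<^sup>+d. (\<Sum>\<tau>\<in>?P. h (gaps_seq k (xbar d)) * F d * (if ?ranks \<tau> d then 1 else 0))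
      \<partial>Pi_lborel {1..k})"
  proof (rule nn_integral_sum[symmetric])
    fix \<tau> assume "\<tau> \<in> ?P"
    then have "\<tau> permutes {0..k}" by simp
    note measurable_ranking_indicator[OF this, measurable]
    show "(\<lambda>d. h (gaps_seq k (xbar d)) * F d * (if ?ranks \<tau> d then 1 else 0))
      \<in> borel_measurable (Pi_lborel {1..k})"
      by measurable
  qed
  also have "\<dots> = (\<integral>\<^sup>+d. h (gaps_seq k (xbar d)) * F d * (if inj_on (xbar d) {0..k} then 1 else 0)
      \<partial>Pi_lborel {1..k})"
    by (simp add: sum_distrib_left[symmetric] sum_ranking_indicator)
  also have "\<dots> = (\<integral>\<^sup>+d. h (gaps_seq k (xbar d)) * F d \<partial>Pi_lborel {1..k})"
    by (rule nn_integral_cong_AE) (use AE_inj_on_xbar[of k] in \<open>auto elim!: AE_mp\<close>)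
  finally show ?thesis by simp
qed

lemma distributed_gaps_seq_xbar:
  assumes "distributed N (Pi_lborel {1..k}) D F"
  shows "distributed N (Pi_lborel {1..k}) (\<lambda>\<omega>. gaps_seq k (xbar (D \<omega>))) (gaps_density F k)"
proof -
  let ?P = "Pi_lborel {1..k}" and ?G = "\<lambda>d. gaps_seq k (xbar d)"
  have D_meas[measurable]: "D \<in> measurable N ?P" and [measurable]: "F \<in> borel_measurable ?P"
    and distr_D: "distr N ?P D = density ?P F"
    using assms by (simp_all add: distributed_def)
  have G_meas[measurable]: "?G \<in> measurable ?P ?P"
    by (rule measurable_gaps_seq_xbar)
  have density_meas[measurable]: "gaps_density F k \<in> borel_measurable ?P"
    by (rule measurable_gaps_density) measurable
  have "distr N ?P (\<lambda>\<omega>. ?G (D \<omega>)) = distr (distr N ?P D) ?P ?G"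
    by (simp only: distr_distr[OF G_meas D_meas] comp_def)
  also have "\<dots> = distr (density ?P F) ?P ?G"
    by (simp only: distr_D)
  also have "\<dots> = density ?P (gaps_density F k)"
  proof (rule measure_eqI)
    fix A assume "A \<in> sets (distr (density ?P F) ?P ?G)"
    then have A[measurable]: "A \<in> sets ?P" by simp
    have "?G \<in> measurable (density ?P F) ?P"
      using G_meas by (simp only: measurable_density_eq1)
    then have "emeasure (distr (density ?P F) ?P ?G) A = emeasure (density ?P F) (?G -` A \<inter> space ?P)"
      by (simp only: emeasure_distr[OF _ A] space_density)
    also have "\<dots> = (\<integral>\<^sup>+d. F d * indicator (?G -` A \<inter> space ?P) d \<partial>?P)"
      by (rule emeasure_density) measurable
    also have "\<dots> = (\<integral>\<^sup>+d. indicator A (?G d) * F d \<partial>?P)"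
      by (intro nn_integral_cong) (simp add: indicator_def)
    also have "\<dots> = (\<integral>\<^sup>+x. indicator A x * gaps_density F k x \<partial>?P)"
      by (rule nn_integral_gaps_seq_xbar) measurable
    also have "\<dots> = emeasure (density ?P (gaps_density F k)) A"
      by (simp only: emeasure_density[OF density_meas A] mult.commute)
    finally show "emeasure (distr (density ?P F) ?P ?G) A = emeasure (density ?P (gaps_density F k)) A" .
  qed simp
  finally show ?thesis
    unfolding distributed_def using density_meas measurable_comp[OF D_meas G_meas]
    by (simp add: comp_def)
qed

section \<open>Processes with independent stationary increments\<close>

lemma (in prob_space) distributed_PiM_indep_vars:
  fixes Y :: "'i \<Rightarrow> 'a \<Rightarrow> real"
  assumes I: "finite I" "I \<noteq> {}" and indep: "indep_vars (\<lambda>_. borel) Y I"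
    and Y: "\<And>i. i \<in> I \<Longrightarrow> distributed M lborel (Y i) (\<phi> i)"
  shows "distributed M (Pi_lborel I) (\<lambda>\<omega>. \<lambda>i\<in>I. Y i \<omega>) (\<lambda>x. \<Prod>i\<in>I. \<phi> i (x i))"
proof -
  have Y_meas: "Y i \<in> borel_measurable M" and \<phi>: "\<phi> i \<in> borel_measurable borel"
    and distr_Y: "distr M borel (Y i) = density lborel (\<phi> i)" if "i \<in> I" for i
    using Y[OF that] by (auto simp: distributed_def cong: distr_cong)
  have "sigma_finite_measure (density lborel (\<phi> i))" if "i \<in> I" for i
    using prob_space_distr[OF Y_meas[OF that]] distr_Y[OF that]
    by (simp add: prob_space_imp_sigma_finite)
  then have "PiM I (\<lambda>i. density lborel (\<phi> i)) = density (Pi_lborel I) (\<lambda>x. \<Prod>i\<in>I. \<phi> i (x i))"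
    using I(1) \<phi> by (rule PiM_density_lborel[rotated 2])
  moreover have "distr M (PiM I (\<lambda>_. borel)) (\<lambda>\<omega>. \<lambda>i\<in>I. Y i \<omega>) = PiM I (\<lambda>i. distr M borel (Y i))"
    using indep_vars_iff_distr_eq_PiM'[OF I(2), where M'="\<lambda>_. borel" and X=Y] indep Y_meas by simp
  moreover have "distr M (Pi_lborel I) (\<lambda>\<omega>. \<lambda>i\<in>I. Y i \<omega>) = distr M (PiM I (\<lambda>_. borel)) (\<lambda>\<omega>. \<lambda>i\<in>I. Y i \<omega>)"
    by (rule distr_cong) (auto intro!: sets_PiM_cong)
  moreover have "PiM I (\<lambda>i. distr M borel (Y i)) = PiM I (\<lambda>i. density lborel (\<phi> i))"
    by (rule PiM_cong) (simp_all add: distr_Y)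
  moreover have "(\<lambda>\<omega>. \<lambda>i\<in>I. Y i \<omega>) \<in> measurable M (Pi_lborel I)"
    using Y_meas by (intro measurable_restrict) simp
  moreover have "(\<lambda>x. \<Prod>i\<in>I. \<phi> i (x i)) \<in> borel_measurable (Pi_lborel I)"
    using \<phi> by (intro borel_measurable_prod_ennreal measurable_comp[OF measurable_Pi_lborel_component, unfolded comp_def])
  ultimately show ?thesis by (simp add: distributed_def)
qed

lemma (in prob_space) distributed_increments:
  fixes X :: "real \<Rightarrow> 'a \<Rightarrow> real" and s :: "nat \<Rightarrow> real"
  assumes X: "\<And>u. X u \<in> borel_measurable M"
    and s: "strict_mono_on {0..k} s" and k: "k \<ge> 1"
    and indep: "indep_vars (\<lambda>_. borel) (\<lambda>i \<omega>. X (s i) \<omega> - X (s (i - 1)) \<omega>) {1..k}"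
    and stat: "\<And>u v. u < v \<Longrightarrow> distr M borel (\<lambda>\<omega>. X v \<omega> - X u \<omega>) = distr M borel (X (v - u))"
    and dens: "\<And>u. u \<noteq> 0 \<Longrightarrow> distributed M lborel (X u) (\<Phi> u)"
  shows "distributed M (Pi_lborel {1..k}) (\<lambda>\<omega>. \<lambda>i\<in>{1..k}. X (s i) \<omega> - X (s (i - 1)) \<omega>)
    (\<lambda>x. \<Prod>i\<in>{1..k}. \<Phi> (s i - s (i - 1)) (x i))"
proof (rule distributed_PiM_indep_vars[OF _ _ indep])
  fix i assume "i \<in> {1..k}"
  then have "i - 1 \<in> {0..k}" "i \<in> {0..k}" "i - 1 < i" by auto
  then have lt: "s (i - 1) < s i" by (rule strict_mono_onD[OF s])
  have lborel_borel: "distr M lborel Y = distr M borel Y" for Y :: "'a \<Rightarrow> real"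
    by (rule distr_cong) simp_all
  have "distr M lborel (\<lambda>\<omega>. X (s i) \<omega> - X (s (i - 1)) \<omega>) = distr M lborel (X (s i - s (i - 1)))"
    by (simp only: lborel_borel stat[OF lt])
  with dens[of "s i - s (i - 1)"] lt X show
    "distributed M lborel (\<lambda>\<omega>. X (s i) \<omega> - X (s (i - 1)) \<omega>) (\<Phi> (s i - s (i - 1)))"
    by (simp add: distributed_def)
qed (use k in auto)

lemma Psi_eq_gaps_density: "Psi \<Phi> k g = gaps_density (\<lambda>y. \<Prod>i\<in>{1..k}. \<Phi> (g i) (y i)) k"
proof
  fix x
  have "(\<Prod>i=1..k. \<Phi> (g i) (xbar x (\<tau> i) - xbar x (\<tau> (i - 1))) * (if 0 < x i then 1 else 0))
      = (\<Prod>i\<in>{1..k}. \<Phi> (g i) (increments_along k \<tau> x i)) * (\<Prod>i=1..k. if 0 < x i then 1 else 0)"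
    for \<tau>
    by (simp add: prod.distrib increments_along_def)
  then show "Psi \<Phi> k g x = gaps_density (\<lambda>y. \<Prod>i\<in>{1..k}. \<Phi> (g i) (y i)) k x"
    by (simp add: Psi_def gaps_density_def)
qed

lemma strict_mono_on_sort_nth:
  fixes t :: "nat \<Rightarrow> 'a::linorder"
  assumes "inj_on t {0..k}"
  shows "strict_mono_on {0..k} (\<lambda>j. sort (map t [0..<Suc k]) ! j)"
proof -
  have "distinct (map t [0..<Suc k])"
    using assms by (simp add: distinct_map atLeastLessThanSuc_atLeastAtMost del: upt_Suc)
  then have "sorted_wrt (<) (sort (map t [0..<Suc k]))"
    by (simp add: strict_sorted_iff del: upt_Suc)
  from sorted_wrt_nth_less[OF this] show ?thesis
    by (auto intro!: strict_mono_onI simp del: upt_Suc)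
qed

lemma gaps_seq_sort:
  fixes t :: "nat \<Rightarrow> 'a::linorder" and f :: "'a \<Rightarrow> real"
  shows "gaps_seq k (\<lambda>i. f (t i)) = gaps_seq k (\<lambda>j. f (sort (map t [0..<Suc k]) ! j))"
proof (rule gaps_seq_mset_cong)
  let ?L = "sort (map t [0..<Suc k])"
  have L: "map (\<lambda>j. ?L ! j) [0..<Suc k] = ?L"
    by (rule nth_equalityI) (simp_all del: upt_Suc)
  have "mset (map (\<lambda>i. f (t i)) [0..<Suc k]) = image_mset f (mset ?L)"
    by (simp add: multiset.map_comp comp_def del: upt_Suc)
  also have "\<dots> = mset (map (\<lambda>j. f (?L ! j)) [0..<Suc k])"
    by (subst L[symmetric]) (simp add: multiset.map_comp comp_def del: upt_Suc)
  finally show "mset (map (\<lambda>i. f (t i)) [0..<Suc k]) = mset (map (\<lambda>j. f (?L ! j)) [0..<Suc k])" .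
qed

lemma gaps_seq_telescope:
  fixes f :: "'a \<Rightarrow> real" and s :: "nat \<Rightarrow> 'a"
  shows "gaps_seq k (\<lambda>j. f (s j)) = gaps_seq k (xbar (\<lambda>i\<in>{1..k}. f (s i) - f (s (i - 1))))"
proof -
  define D where "D = (\<lambda>i\<in>{1..k}. f (s i) - f (s (i - 1)))"
  have telescope: "f (s j) = xbar D j + f (s 0)" if "j \<le> k" for j
    using that
  proof (induction j)
    case (Suc j)
    from Suc.prems have IH: "f (s j) = xbar D j + f (s 0)" by (intro Suc.IH) simp
    have "D (Suc j) = f (s (Suc j)) - f (s j)"
      using Suc.prems by (simp add: D_def)
    with IH show ?case by (simp only: xbar_Suc)
  next
    case 0
    show ?case by (simp only: xbar_0 add_0)
  qed
  have "map (\<lambda>j. f (s j)) [0..<Suc k] = map (\<lambda>j. xbar D j + f (s 0)) [0..<Suc k]"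
    by (intro map_cong refl telescope) (auto simp del: upt_Suc)
  then have "gaps_seq k (\<lambda>j. f (s j)) = gaps_seq k (\<lambda>j. xbar D j + f (s 0))"
    by (rule gaps_seq_mset_cong[OF arg_cong[where f=mset]])
  then show ?thesis by (simp only: gaps_seq_add_const D_def)
qed

lemma gaps_seq_sorted_increments:
  fixes t :: "nat \<Rightarrow> 'a::linorder" and f :: "'a \<Rightarrow> real"
  shows "gaps_seq k (\<lambda>i. f (t i)) = gaps_seq k (xbar (\<lambda>i\<in>{1..k}.
    f (sort (map t [0..<Suc k]) ! i) - f (sort (map t [0..<Suc k]) ! (i - 1))))"
  by (rule trans[OF gaps_seq_sort gaps_seq_telescope])

theorem proposition2:
  fixes M :: "'a measure" and X :: "real \<Rightarrow> 'a \<Rightarrow> real"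
    and \<Phi> :: "real \<Rightarrow> real \<Rightarrow> ennreal"
    and k :: nat and t :: "nat \<Rightarrow> real" and g :: "nat \<Rightarrow> real"
  assumes "prob_space M"
    and meas: "\<And>s. X s \<in> borel_measurable M"
    and X0: "AE \<omega> in M. X 0 \<omega> = 0"
    and indep_incr: "\<And>(m::nat) s. m \<ge> 1 \<Longrightarrow> strict_mono_on {0..m} s \<Longrightarrow>
          prob_space.indep_vars M (\<lambda>_. borel) (\<lambda>i \<omega>. X (s i) \<omega> - X (s (i - 1)) \<omega>) {1..m}"
    and stat_incr: "\<And>s u. s < u \<Longrightarrow>
          distr M borel (\<lambda>\<omega>. X u \<omega> - X s \<omega>) = distr M borel (X (u - s))"
    and dens: "\<And>s. s \<noteq> 0 \<Longrightarrow> distributed M lborel (X s) (\<Phi> s)"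
    and "k \<ge> 1"
    and t0: "t 0 = 0"
    and tdist: "inj_on t {0..k}"
    and g: "\<And>i. i \<in> {1..k} \<Longrightarrow> g i = gaps_seq k t i"
  shows "distributed M (PiM {1..k} (\<lambda>_. lborel))
           (\<lambda>\<omega>. gaps_seq k (\<lambda>i. X (t i) \<omega>))
           (Psi \<Phi> k g)"
proof -
  interpret prob_space M by fact
  define s where "s j = sort (map t [0..<Suc k]) ! j" for j
  define D where "D = (\<lambda>\<omega>. \<lambda>i\<in>{1..k}. X (s i) \<omega> - X (s (i - 1)) \<omega>)"
  have s: "strict_mono_on {0..k} s"
    unfolding s_def using tdist by (rule strict_mono_on_sort_nth)
  have "(\<lambda>x. \<Prod>i\<in>{1..k}. \<Phi> (s i - s (i - 1)) (x i)) = (\<lambda>x. \<Prod>i\<in>{1..k}. \<Phi> (g i) (x i))"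
    by (intro ext prod.cong) (simp_all add: g gaps_seq_def s_def Let_def)
  with distributed_increments[OF meas s \<open>k \<ge> 1\<close> indep_incr[OF \<open>k \<ge> 1\<close> s] stat_incr dens]
  have "distributed M (Pi_lborel {1..k}) D (\<lambda>x. \<Prod>i\<in>{1..k}. \<Phi> (g i) (x i))"
    by (simp add: D_def)
  then have "distributed M (Pi_lborel {1..k}) (\<lambda>\<omega>. gaps_seq k (xbar (D \<omega>))) (Psi \<Phi> k g)"
    unfolding Psi_eq_gaps_density by (rule distributed_gaps_seq_xbar)
  moreover have "gaps_seq k (\<lambda>i. X (t i) \<omega>) = gaps_seq k (xbar (D \<omega>))" for \<omega>
    unfolding D_def s_def by (rule gaps_seq_sorted_increments)
  ultimately show ?thesis by simp
qed

end
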